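(* Let $m\ge 2$ and let $A=(a_{ij})_{i,j=1}^m$ and $B=(b_{ij})_{i,j=1}^m$ be real matrices with $0\le a_{ij},b_{ij}\le 1$ for all $i,j$. Assume $\det(A)=\det(B)=0$ and $AB^T=\mathbf{1}$, where $\mathbf{1}$ is the $m\times m$ matrix all of whose entries are $1$, and assume that neither $A$ nor $B$ has all of its rows identical. Let $V:S^{m-1}\to S^{m-1}$ be the operator $$(V(x))_k=\Big(\sum_{i=1}^m a_{ik}x_i\Big)\Big(\sum_{j=1}^m b_{jk}x_j\Big),\qquad k=1,\dots,m.$$ Let $c=(c_1,\dots,c_m)^T\in\mathbb{R}^m$ satisfy $c_i\ge 0$ for all $i$, and suppose that either $Ac\le c$ or $Bc\le c$ (componentwise inequality). Then the function $\psi_c:S^{m-1}\to\mathbb{R}$, $\psi_c(x)=\sum_{k=1}^m c_kx_k$, is a Lyapunov function for $V$, i.e. for every $x^{(0)}\in S^{m-1}$ the limit $\lim_{n\to\infty}\psi_c(x^{(n)})$ exists, where $x^{(n+1)}=V(x^{(n)})$.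
   Context: $S^{m-1}=\{x\in\mathbb{R}^m: x_i\ge 0,\ \sum_{i=1}^m x_i=1\}$ is the standard simplex. The conditions on $A,B$ ensure that $P_{ij,k}=a_{ik}b_{jk}$ satisfies $P_{ij,k}\ge 0$ and $\sum_k P_{ij,k}=1$, so $V(x)_k=\sum_{i,j}P_{ij,k}x_ix_j$ is a quadratic stochastic operator mapping $S^{m-1}$ to itself (a "separable" quadratic stochastic operator). A continuous function $\phi:S^{m-1}\to\mathbb{R}$ is called a Lyapunov function for $V$ if $\lim_{n\to\infty}\phi(x^{(n)})$ exists for every initial point $x^{(0)}\in S^{m-1}$, where $x^{(n+1)}=V(x^{(n)})$. *)

theory Defs
  imports "HOL-Analysis.Analysis"
begin

text \<open>Standard simplex S^{m-1} in R^m, with m = CARD('n).\<close>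
definition std_simplex :: "(real^'n) set" where
  "std_simplex = {x. (\<forall>i. 0 \<le> x$i) \<and> (\<Sum>i\<in>UNIV. x$i) = 1}"

definition sep_qso :: "real^'n^'n \<Rightarrow> real^'n^'n \<Rightarrow> real^'n \<Rightarrow> real^'n" where
  "sep_qso A B x = (\<chi> k. (\<Sum>i\<in>UNIV. A$i$k * x$i) * (\<Sum>j\<in>UNIV. B$j$k * x$j))"

definition lyapunov_function :: "(real^'n \<Rightarrow> real^'n) \<Rightarrow> (real^'n \<Rightarrow> real) \<Rightarrow> bool" where
  "lyapunov_function V \<phi> \<longleftrightarrow> continuous_on std_simplex \<phi> \<and>
     (\<forall>x0\<in>std_simplex. convergent (\<lambda>n. \<phi> ((V ^^ n) x0)))"

end

theory Submission
  imports Defs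
begin

text \<open>Writing \<open>V(x)\<^sub>k = (xA)\<^sub>k (xB)\<^sub>k\<close>, the entries of \<open>xB\<close> lie in \<open>[0,1]\<close> on the simplex, so
  \<open>\<psi>\<^sub>c(V x) \<le> \<Sum>\<^sub>k c\<^sub>k (xA)\<^sub>k = x \<bullet> Ac \<le> x \<bullet> c = \<psi>\<^sub>c(x)\<close> when \<open>Ac \<le> c\<close> (symmetrically when
  \<open>Bc \<le> c\<close>). Thus \<open>\<psi>\<^sub>c\<close> decreases along every trajectory and is bounded below by \<open>0\<close>, so it
  converges.\<close>

lemma convergent_orbit_if_descending_bounded_below:
  fixes f :: "'a \<Rightarrow> 'a" and \<phi> :: "'a \<Rightarrow> real"
  assumes invariant: "\<And>x. x \<in> S \<Longrightarrow> f x \<in> S"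
    and descends: "\<And>x. x \<in> S \<Longrightarrow> \<phi> (f x) \<le> \<phi> x"
    and bounded: "\<And>x. x \<in> S \<Longrightarrow> b \<le> \<phi> x"
    and x0: "x0 \<in> S"
  shows "convergent (\<lambda>n. \<phi> ((f ^^ n) x0))"
proof -
  have orbit: "(f ^^ n) x0 \<in> S" for n
    by (induction n) (simp_all add: x0 invariant)
  have "decseq (\<lambda>n. \<phi> ((f ^^ n) x0))"
    unfolding decseq_Suc_iff using descends[OF orbit] by simp
  with bounded[OF orbit] show ?thesis
    using decseq_convergent unfolding convergent_def by blast
qed

lemma sep_qso_nth: "sep_qso A B x $ k = (x v* A) $ k * (x v* B) $ k"
  by (simp add: sep_qso_def vector_matrix_mult_def mult.commute)

lemma sep_qso_commute: "sep_qso A B = sep_qso B A"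
  by (simp add: fun_eq_iff sep_qso_def mult.commute)

lemma vector_matrix_mult_nonneg:
  fixes M :: "real^'n^'m"
  assumes "\<forall>i j. 0 \<le> M$i$j" and "\<forall>i. 0 \<le> x$i"
  shows "0 \<le> (x v* M) $ k"
  using assms by (simp add: vector_matrix_mult_def sum_nonneg)

lemma vector_matrix_mult_le_one:
  fixes M :: "real^'n^'n"
  assumes "\<forall>i j. M$i$j \<le> 1" and x: "x \<in> std_simplex"
  shows "(x v* M) $ k \<le> 1"
proof -
  have "(x v* M) $ k = (\<Sum>i\<in>UNIV. x$i * M$i$k)"
    by (simp add: vector_matrix_mult_def)
  also have "\<dots> \<le> (\<Sum>i\<in>UNIV. x$i)"
    using assms unfolding std_simplex_def
    by (intro sum_mono) (auto intro: mult_left_le)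
  finally have "(x v* M) $ k \<le> (\<Sum>i\<in>UNIV. x$i)" .
  with x show ?thesis by (simp add: std_simplex_def)
qed

lemma sum_sep_qso:
  fixes A B :: "real^'n^'n"
  assumes "A ** transpose B = (\<chi> i j. 1)"
  shows "(\<Sum>k\<in>UNIV. sep_qso A B x $ k) = (\<Sum>i\<in>UNIV. x$i)\<^sup>2"
proof -
  have "(\<Sum>k\<in>UNIV. sep_qso A B x $ k) = (x v* A) \<bullet> (transpose B *v x)"
    by (simp add: sep_qso_nth inner_vec_def)
  also have "\<dots> = x \<bullet> ((A ** transpose B) *v x)"
    by (simp only: dot_lmul_matrix matrix_vector_mul_assoc)
  also have "\<dots> = (\<Sum>i\<in>UNIV. x$i)\<^sup>2"
    using assms by (simp add: inner_vec_def matrix_vector_mult_def power2_eq_square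
        sum_distrib_right)
  finally show ?thesis .
qed

lemma sep_qso_in_std_simplex:
  fixes A B :: "real^'n^'n"
  assumes "\<forall>i j. 0 \<le> A$i$j" and "\<forall>i j. 0 \<le> B$i$j"
    and "A ** transpose B = (\<chi> i j. 1)"
    and x: "x \<in> std_simplex"
  shows "sep_qso A B x \<in> std_simplex"
  using assms sum_sep_qso[of A B x]
  by (auto simp: std_simplex_def sep_qso_nth vector_matrix_mult_nonneg)

lemma sep_qso_descends:
  fixes A B :: "real^'n^'n" and c :: "real^'n"
  assumes A_nonneg: "\<forall>i j. 0 \<le> A$i$j" and B_le_one: "\<forall>i j. B$i$j \<le> 1"
    and c_nonneg: "\<forall>i. 0 \<le> c$i" and Ac_le: "\<forall>i. (A *v c)$i \<le> c$i"
    and x: "x \<in> std_simplex"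
  shows "c \<bullet> sep_qso A B x \<le> c \<bullet> x"
proof -
  have x_nonneg: "\<forall>i. 0 \<le> x$i" using x by (simp add: std_simplex_def)
  have "c \<bullet> sep_qso A B x = (\<Sum>k\<in>UNIV. c$k * (x v* A)$k * (x v* B)$k)"
    by (simp add: inner_vec_def sep_qso_nth mult.assoc)
  also have "\<dots> \<le> (\<Sum>k\<in>UNIV. c$k * (x v* A)$k)"
    using c_nonneg vector_matrix_mult_nonneg[OF A_nonneg x_nonneg]
      vector_matrix_mult_le_one[OF B_le_one x]
    by (intro sum_mono mult_left_le) simp_all
  also have "\<dots> = (x v* A) \<bullet> c"
    by (simp add: inner_vec_def mult.commute)
  also have "\<dots> = x \<bullet> (A *v c)"
    by (rule dot_lmul_matrix)
  also have "\<dots> \<le> x \<bullet> c"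
    using x_nonneg Ac_le by (simp add: inner_vec_def sum_mono mult_left_mono)
  finally show ?thesis by (simp add: inner_commute)
qed

theorem theorem3p1:
  fixes A B :: "real^'n^'n" and c :: "real^'n"
  assumes m2: "CARD('n) \<ge> 2"
    and A_range: "\<forall>i j. 0 \<le> A$i$j \<and> A$i$j \<le> 1"
    and B_range: "\<forall>i j. 0 \<le> B$i$j \<and> B$i$j \<le> 1"
    and detA: "det A = 0" and detB: "det B = 0"
    and ABT: "A ** transpose B = (\<chi> i j. 1)"
    and A_rows: "\<exists>i j. A$i \<noteq> A$j"
    and B_rows: "\<exists>i j. B$i \<noteq> B$j"
    and c_nonneg: "\<forall>i. 0 \<le> c$i"
    and c_sub: "(\<forall>i. (A *v c)$i \<le> c$i) \<or> (\<forall>i. (B *v c)$i \<le> c$i)"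
  shows "lyapunov_function (sep_qso A B) (\<lambda>x. \<Sum>k\<in>UNIV. c$k * x$k)"
proof -
  have \<psi>_eq: "(\<lambda>x. \<Sum>k\<in>UNIV. c$k * x$k) = (\<lambda>x. c \<bullet> x)"
    by (simp add: fun_eq_iff inner_vec_def)
  have descends: "c \<bullet> sep_qso A B x \<le> c \<bullet> x" if "x \<in> std_simplex" for x
    using c_sub
  proof
    assume "\<forall>i. (A *v c)$i \<le> c$i"
    then show ?thesis using sep_qso_descends A_range B_range c_nonneg that by blast
  next
    assume "\<forall>i. (B *v c)$i \<le> c$i"
    then show ?thesis
      using sep_qso_descends A_range B_range c_nonneg that by (metis sep_qso_commute)
  qed
  have bounded: "0 \<le> c \<bullet> x" if "x \<in> std_simplex" for x
    using that c_nonneg by (simp add: std_simplex_def inner_vec_def sum_nonneg)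
  have invariant: "sep_qso A B x \<in> std_simplex" if "x \<in> std_simplex" for x
    using sep_qso_in_std_simplex A_range B_range ABT that by blast
  show ?thesis
    unfolding lyapunov_function_def \<psi>_eq
    using convergent_orbit_if_descending_bounded_below[of std_simplex "sep_qso A B" "\<lambda>x. c \<bullet> x"]
      invariant descends bounded
    by (auto intro: continuous_intros)
qed

end
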